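(* Let $X$ be a countable set, let $w$ be an essentially locally finite weight on $X$ generating a metric $\delta=\delta_w$, let $x\in X$ and let $R>0$. Let $\mathcal P\subseteq\{\gamma\in\Pi(X)\mid \gamma(0)=x,\ l_w(\gamma)<R\}$ be an infinite set of finite paths. Then there exists an infinite path $\gamma_\infty\in\Pi_\infty(X)$ with $l_w(\gamma_\infty)\le R$ such that for every $n\in\mathbb N$ there exist infinitely many paths $\gamma\in\mathcal P$ with $\gamma(k)=\gamma_\infty(k)$ for $k=0,\dots,n$.
   Context: $\Pi(X)$ is the set of injective maps $\gamma:\{0,\dots,n\}\to X$, $n\in\mathbb N_0$ (finite paths, identified with $(\gamma(0),\dots,\gamma(n))$), and $\Pi_\infty(X)$ is the set of injective maps $\gamma:\mathbb N_0\to X$ (infinite paths). A weight on $X$ is a symmetric function $w:X\times X\to[0,\infty]$ with $w(x,y)=0$ iff $x=y$; it is essentially locally finite if $\#\{y\in X\mid w(x,y)<R\}<\infty$ for all $x\in X$, $R>0$. The $w$-length of $\gamma=(x_0,\dots,x_n)$ is $l_w(\gamma)=\sum_{i=1}^n w(x_{i-1},x_i)$, and of an infinite path $(x_0,x_1,\dots)$ it is $\sum_{i=1}^\infty w(x_{i-1},x_i)$. $\delta_w(x,y):=\inf\{l_w(\gamma)\mid\gamma\text{ a path from }x\text{ to }y\}$. *)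

theory Defs
  imports "HOL-Analysis.Analysis" "HOL-Library.Extended_Nonnegative_Real"
begin

definition is_weight :: "'a set \<Rightarrow> ('a \<Rightarrow> 'a \<Rightarrow> ennreal) \<Rightarrow> bool" where
  "is_weight X w \<longleftrightarrow> (\<forall>x\<in>X. \<forall>y\<in>X. w x y = w y x \<and> (w x y = 0 \<longleftrightarrow> x = y))"

definition ess_locally_finite :: "'a set \<Rightarrow> ('a \<Rightarrow> 'a \<Rightarrow> ennreal) \<Rightarrow> bool" where
  "ess_locally_finite X w \<longleftrightarrow>
     (\<forall>x\<in>X. \<forall>R::real. R > 0 \<longrightarrow> finite {y\<in>X. w x y < ennreal R})"

definition fin_path :: "'a set \<Rightarrow> 'a list \<Rightarrow> bool" where
  "fin_path X p \<longleftrightarrow> p \<noteq> [] \<and> distinct p \<and> set p \<subseteq> X"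

definition inf_path :: "'a set \<Rightarrow> (nat \<Rightarrow> 'a) \<Rightarrow> bool" where
  "inf_path X g \<longleftrightarrow> inj g \<and> range g \<subseteq> X"

definition path_len :: "('a \<Rightarrow> 'a \<Rightarrow> ennreal) \<Rightarrow> 'a list \<Rightarrow> ennreal" where
  "path_len w p = (\<Sum>i\<in>{1..<length p}. w (p ! (i - 1)) (p ! i))"

definition inf_path_len :: "('a \<Rightarrow> 'a \<Rightarrow> ennreal) \<Rightarrow> (nat \<Rightarrow> 'a) \<Rightarrow> ennreal" where
  "inf_path_len w g = (\<Sum>i. w (g i) (g (Suc i)))"

definition path_metric :: "'a set \<Rightarrow> ('a \<Rightarrow> 'a \<Rightarrow> ennreal) \<Rightarrow> 'a \<Rightarrow> 'a \<Rightarrow> ennreal" where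
  "path_metric X w x y =
     Inf {path_len w p | p. fin_path X p \<and> hd p = x \<and> last p = y}"

definition generates_metric :: "'a set \<Rightarrow> ('a \<Rightarrow> 'a \<Rightarrow> ennreal) \<Rightarrow> bool" where
  "generates_metric X w \<longleftrightarrow>
     (\<forall>x\<in>X. \<forall>y\<in>X. path_metric X w x y < \<infinity>
        \<and> (path_metric X w x y = 0 \<longleftrightarrow> x = y)
        \<and> path_metric X w x y = path_metric X w y x
        \<and> (\<forall>z\<in>X. path_metric X w x z \<le> path_metric X w x y + path_metric X w y z))"

end

(*
  Koenig's lemma. Call a prefix l good if infinitely many paths of P extend it. The empty prefix
  is good, and every good l has a good one-point extension: the vertex following l in a path of
  P is x if l = [], and otherwise lies at w-distance < R from last l, so by essential local
  finiteness only finitely many vertices occur there and the pigeonhole principle applies.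
  Choosing good extensions forever yields g; each initial segment of g is a prefix of a path in P,
  so g is injective with values in X, and its partial lengths are bounded by R.
*)

theory Submission
  imports Defs "HOL-Library.Sublist"
begin

lemma prefix_map_upt_iff:
  "prefix (map g [0..<n]) p \<longleftrightarrow> n \<le> length p \<and> (\<forall>k<n. p ! k = g k)"
proof
  assume "prefix (map g [0..<n]) p"
  then obtain r where "p = map g [0..<n] @ r"
    by (auto elim: prefixE)
  then show "n \<le> length p \<and> (\<forall>k<n. p ! k = g k)"
    by (auto simp: nth_append)
next
  assume "n \<le> length p \<and> (\<forall>k<n. p ! k = g k)"
  then have "take n p = map g [0..<n]"
    by (auto intro: nth_equalityI)
  then show "prefix (map g [0..<n]) p"
    by (metis take_is_prefix)
qed

lemma exists_sequence_all_prefixes: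
  assumes "Q []" and "\<And>l. Q l \<Longrightarrow> \<exists>y. Q (l @ [y])"
  shows "\<exists>g. \<forall>n. Q (map g [0..<n])"
proof -
  obtain succ where succ: "Q (l @ [succ l])" if "Q l" for l
    using assms(2) by metis
  define seq where "seq n = rec_nat [] (\<lambda>_ l. l @ [succ l]) n" for n
  define g where "g n = succ (seq n)" for n
  have seq_Suc: "seq (Suc n) = seq n @ [g n]" for n
    by (simp add: seq_def g_def)
  have "seq n = map g [0..<n] \<and> Q (seq n)" for n
  proof (induction n)
    case 0
    then show ?case
      using assms(1) by (simp add: seq_def)
  next
    case (Suc n)
    then have "Q (seq n @ [g n])"
      using succ unfolding g_def by blast
    with Suc show ?case
      by (simp add: seq_Suc)
  qed
  then show ?thesis
    by metis
qed

lemma infinite_prefix_extensions_snoc: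
  assumes "infinite {p\<in>P. prefix l p}"
    and "finite ((\<lambda>p. p ! length l) ` {p\<in>P. prefix l p \<and> length l < length p})"
  shows "\<exists>y. infinite {p\<in>P. prefix (l @ [y]) p}"
proof (rule ccontr)
  let ?N = "(\<lambda>p. p ! length l) ` {p\<in>P. prefix l p \<and> length l < length p}"
  assume "\<nexists>y. infinite {p\<in>P. prefix (l @ [y]) p}"
  then have "finite ({l} \<union> (\<Union>y\<in>?N. {p\<in>P. prefix (l @ [y]) p}))"
    using assms(2) by (intro finite_UnI finite_UN_I) simp_all
  moreover have "{p\<in>P. prefix l p} \<subseteq> {l} \<union> (\<Union>y\<in>?N. {p\<in>P. prefix (l @ [y]) p})"
  proof
    fix p
    assume p: "p \<in> {p\<in>P. prefix l p}"
    show "p \<in> {l} \<union> (\<Union>y\<in>?N. {p\<in>P. prefix (l @ [y]) p})"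
    proof (cases "length l < length p")
      case True
      then show ?thesis
        using p append_one_prefix by fastforce
    next
      case False
      then show ?thesis
        using p by (auto elim!: prefixE)
    qed
  qed
  ultimately show False
    using assms(1) finite_subset by blast
qed

lemma path_len_conv_sum: "path_len w p = (\<Sum>i<length p - 1. w (p ! i) (p ! Suc i))"
proof -
  have "{1..<length p} = Suc ` {..<length p - 1}"
    by (cases "length p") (auto simp: image_Suc_lessThan)
  then show ?thesis
    unfolding path_len_def by (simp add: sum.reindex)
qed

lemma path_len_step_le:
  assumes "Suc i < length p"
  shows "w (p ! i) (p ! Suc i) \<le> path_len w p"
  unfolding path_len_conv_sum using assms
  by (intro member_le_sum) auto

lemma path_len_mono_prefix:
  assumes "prefix q p"
  shows "path_len w q \<le> path_len w p"
proof -
  obtain r where p: "p = q @ r"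
    using assms by (auto elim: prefixE)
  have "path_len w q = (\<Sum>i<length q - 1. w (p ! i) (p ! Suc i))"
    unfolding path_len_conv_sum p by (intro sum.cong) (auto simp: nth_append)
  also have "\<dots> \<le> path_len w p"
    unfolding path_len_conv_sum p by (intro sum_mono2) auto
  finally show ?thesis .
qed

lemma path_len_map_upt: "path_len w (map g [0..<Suc n]) = (\<Sum>i<n. w (g i) (g (Suc i)))"
  by (simp add: path_len_conv_sum del: upt_Suc)

lemma inf_path_len_le:
  assumes "\<And>n. path_len w (map g [0..<Suc n]) \<le> c"
  shows "inf_path_len w g \<le> c"
  unfolding inf_path_len_def
  using assms by (intro suminf_le_const) (simp_all add: path_len_map_upt del: upt_Suc)

lemma fin_path_prefix:
  assumes "fin_path X p" "prefix q p" "q \<noteq> []"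
  shows "fin_path X q"
  using assms by (auto simp: fin_path_def prefix_def)

lemma inf_pathI:
  assumes "\<And>n. fin_path X (map g [0..<Suc n])"
  shows "inf_path X g"
  unfolding inf_path_def
proof
  show "inj g"
  proof (rule linorder_injI)
    fix i j :: nat
    assume "i < j"
    moreover have "inj_on g {0..<Suc j}"
      using assms[of j] by (simp add: fin_path_def distinct_map del: upt_Suc)
    ultimately show "g i \<noteq> g j"
      by (auto dest: inj_onD)
  qed
  show "range g \<subseteq> X"
    using assms by (force simp: fin_path_def)
qed

lemma inf_path_from_prefixes:
  assumes "\<And>n. \<exists>p. prefix (map g [0..<Suc n]) p \<and> fin_path X p \<and> path_len w p \<le> c"
  shows "inf_path X g \<and> inf_path_len w g \<le> c"
proof
  show "inf_path X g"
  proof (rule inf_pathI)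
    fix n
    obtain p where "fin_path X p" "prefix (map g [0..<Suc n]) p"
      using assms by blast
    then show "fin_path X (map g [0..<Suc n])"
      by (rule fin_path_prefix) simp
  qed
  show "inf_path_len w g \<le> c"
  proof (rule inf_path_len_le)
    fix n
    obtain p where "prefix (map g [0..<Suc n]) p" "path_len w p \<le> c"
      using assms by blast
    then show "path_len w (map g [0..<Suc n]) \<le> c"
      using path_len_mono_prefix order.trans by blast
  qed
qed

lemma next_vertices_finite:
  assumes "ess_locally_finite X w" and "R > 0"
    and "P \<subseteq> {p. fin_path X p \<and> hd p = x \<and> path_len w p < ennreal R}"
  shows "finite ((\<lambda>p. p ! length l) ` {p\<in>P. prefix l p \<and> length l < length p})"
proof (cases "l = [] \<or> {p\<in>P. prefix l p \<and> length l < length p} = {}")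
  case True
  then have "(\<lambda>p. p ! length l) ` {p\<in>P. prefix l p \<and> length l < length p} \<subseteq> {x}"
    using assms(3) by (auto simp: fin_path_def hd_conv_nth)
  then show ?thesis
    by (rule finite_subset) simp
next
  case False
  then obtain p0 where p0: "p0 \<in> P" "prefix l p0" and "l \<noteq> []"
    by auto
  then have "last l \<in> set p0"
    using set_mono_prefix[OF p0(2)] by auto
  then have "last l \<in> X"
    using p0(1) assms(3) by (auto simp: fin_path_def)
  moreover have "(\<lambda>p. p ! length l) ` {p\<in>P. prefix l p \<and> length l < length p}
      \<subseteq> {y\<in>X. w (last l) y < ennreal R}"
  proof clarify
    fix p
    assume p: "p \<in> P" "prefix l p" "length l < length p"
    then have "p ! (length l - 1) = last l"
      using \<open>l \<noteq> []\<close> by (auto elim!: prefixE simp: nth_append last_conv_nth)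
    then have "w (last l) (p ! length l) \<le> path_len w p"
      using path_len_step_le[of "length l - 1" p w] p(3) \<open>l \<noteq> []\<close> by simp
    also have "\<dots> < ennreal R"
      using p(1) assms(3) by auto
    moreover have "p ! length l \<in> set p"
      using p(3) by simp
    ultimately show "p ! length l \<in> X \<and> w (last l) (p ! length l) < ennreal R"
      using p(1) assms(3) by (auto simp: fin_path_def)
  qed
  ultimately show ?thesis
    using assms(1,2) finite_subset unfolding ess_locally_finite_def by blast
qed

theorem lemma2p3:
  fixes X :: "'a set" and w :: "'a \<Rightarrow> 'a \<Rightarrow> ennreal" and x :: 'a and R :: real
    and P :: "'a list set"
  assumes "countable X"
    and "is_weight X w"
    and "ess_locally_finite X w"
    and "generates_metric X w"
    and "x \<in> X"
    and "R > 0"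
    and "P \<subseteq> {p. fin_path X p \<and> hd p = x \<and> path_len w p < ennreal R}"
    and "infinite P"
  shows "\<exists>g. inf_path X g \<and> inf_path_len w g \<le> ennreal R \<and>
           (\<forall>n::nat. infinite {p\<in>P. n < length p \<and> (\<forall>k\<le>n. p ! k = g k)})"
proof -
  define Q where "Q l \<longleftrightarrow> infinite {p\<in>P. prefix l p}" for l
  have "Q []"
    using assms(8) by (simp add: Q_def)
  moreover have "\<exists>y. Q (l @ [y])" if "Q l" for l
    using that infinite_prefix_extensions_snoc next_vertices_finite[OF assms(3,6,7)]
    unfolding Q_def by blast
  ultimately obtain g where g: "\<And>n. Q (map g [0..<n])"
    using exists_sequence_all_prefixes by metis
  have "\<exists>p. prefix (map g [0..<Suc n]) p \<and> fin_path X p \<and> path_len w p \<le> ennreal R" for n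
  proof -
    obtain p where "p \<in> P" "prefix (map g [0..<Suc n]) p"
      using g[of "Suc n"] not_finite_existsD unfolding Q_def by blast
    then show ?thesis
      using assms(7) by (auto intro: less_imp_le)
  qed
  then have "inf_path X g \<and> inf_path_len w g \<le> ennreal R"
    by (rule inf_path_from_prefixes)
  moreover have "infinite {p\<in>P. n < length p \<and> (\<forall>k\<le>n. p ! k = g k)}" for n
    using g[of "Suc n"]
    by (simp add: Q_def prefix_map_upt_iff less_Suc_eq_le Suc_le_eq del: upt_Suc)
  ultimately show ?thesis
    by blast
qed

end
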